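(* Let $A$ be a Hausdorff topological space. Then $+\infty\in P_h(A)$ if and only if $A$ is infinite.
   Context: For a topological space $A$, $Homeo(A)$ denotes the group of all homeomorphisms $A\to A$ under composition. For a subgroup $G$ of $Homeo(A)$ (acting by $gx=g(x)$), a nonempty subset $Y\subseteq A$ is invariant if $g(y)\in Y$ for all $g\in G$, $y\in Y$. The height of $(G,A)$ is $h(G,A)=\sup\{n\geq 0:$ there exist distinct closed invariant subsets $Y_0\subset Y_1\subset\cdots\subset Y_n=A\}$ (possibly $+\infty$). Finally $P_h(A)=\{h(G,A): G \text{ is a subgroup of } Homeo(A)\}$. *)

theory Defs
  imports "HOL-Analysis.Analysis" "HOL-Library.Extended_Nat"
begin

text \<open>Homeo(A): homeomorphisms of the space X onto itself, represented as functions
  that are extensional on the carrier (so equality of functions is equality on A).\<close>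

definition homeo_subgroup :: "'a topology \<Rightarrow> ('a \<Rightarrow> 'a) set \<Rightarrow> bool" where
  "homeo_subgroup X G \<longleftrightarrow>
     (\<forall>g\<in>G. homeomorphic_map X X g \<and> g \<in> extensional (topspace X)) \<and>
     restrict id (topspace X) \<in> G \<and>
     (\<forall>f\<in>G. \<forall>g\<in>G. restrict (f \<circ> g) (topspace X) \<in> G) \<and>
     (\<forall>g\<in>G. restrict (inv_into (topspace X) g) (topspace X) \<in> G)"

definition invariant_set :: "'a topology \<Rightarrow> ('a \<Rightarrow> 'a) set \<Rightarrow> 'a set \<Rightarrow> bool" where
  "invariant_set X G Y \<longleftrightarrow>
     Y \<noteq> {} \<and> Y \<subseteq> topspace X \<and> (\<forall>g\<in>G. \<forall>y\<in>Y. g y \<in> Y)"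

definition action_height :: "'a topology \<Rightarrow> ('a \<Rightarrow> 'a) set \<Rightarrow> enat" where
  "action_height X G = Sup {enat n | n. \<exists>Y :: nat \<Rightarrow> 'a set.
      (\<forall>i\<le>n. closedin X (Y i) \<and> invariant_set X G (Y i)) \<and>
      (\<forall>i<n. Y i \<subset> Y (Suc i)) \<and> Y n = topspace X}"

definition P_h :: "'a topology \<Rightarrow> enat set" where
  "P_h X = {action_height X G | G. homeo_subgroup X G}"

end

theory Submission
  imports Defs
begin

text \<open>A finite space admits only chains of length at most its cardinality, since a strict chain
  of finite sets strictly increases the cardinality at every step. Conversely, in an infinite
  T1 space (in particular a Hausdorff one) finite sets are closed, so for the trivial group,
  under which every nonempty set is invariant, the sets of the first i points of a sequence of
  distinct points give strict chains of closed invariant sets of every length.\<close>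

lemma Sup_enat_eq_infinity:
  assumes "\<And>n. enat n \<in> S"
  shows "Sup S = \<infinity>"
proof -
  have "enat n \<le> Sup S" for n
    using assms by (rule Sup_upper)
  then show ?thesis
    by (metis Suc_ile_eq enat.exhaust order_less_irrefl)
qed

lemma psubset_chain_card:
  assumes "\<And>i. i < n \<Longrightarrow> Y i \<subset> Y (Suc i)" and "finite (Y n)"
  shows "n \<le> card (Y n)"
  using assms
proof (induction n)
  case 0
  then show ?case by simp
next
  case (Suc n)
  have "Y n \<subset> Y (Suc n)"
    using Suc.prems(1) by simp
  then have "finite (Y n)" and "card (Y n) < card (Y (Suc n))"
    using Suc.prems(2) by (auto intro: finite_subset psubset_card_mono)
  moreover have "n \<le> card (Y n)"
    using Suc.IH Suc.prems(1) \<open>finite (Y n)\<close> by simp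
  ultimately show ?case by simp
qed

lemma action_height_le_card:
  assumes "finite (topspace X)"
  shows "action_height X G \<le> enat (card (topspace X))"
  unfolding action_height_def
proof (rule Sup_least, clarify)
  fix n and Y :: "nat \<Rightarrow> 'a set"
  assume "\<forall>i<n. Y i \<subset> Y (Suc i)" and "Y n = topspace X"
  then show "enat n \<le> enat (card (topspace X))"
    using psubset_chain_card[of n Y] assms by simp
qed

lemma homeo_subgroup_trivial: "homeo_subgroup X {restrict id (topspace X)}"
proof -
  let ?e = "restrict id (topspace X)"
  have "homeomorphic_map X X ?e"
    by (rule homeomorphic_map_eq[of X X id]) auto
  moreover have "restrict (?e \<circ> ?e) (topspace X) = ?e"
    by (auto simp: restrict_def)
  moreover have "restrict (inv_into (topspace X) ?e) (topspace X) = ?e"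
  proof
    fix x
    have "inv_into (topspace X) ?e x = x" if "x \<in> topspace X"
      using inv_into_f_f[of ?e "topspace X" x] that by (simp add: inj_on_def)
    then show "restrict (inv_into (topspace X) ?e) (topspace X) x = ?e x"
      by simp
  qed
  ultimately show ?thesis
    unfolding homeo_subgroup_def by simp
qed

lemma invariant_set_trivial_iff:
  "invariant_set X {restrict id (topspace X)} Y \<longleftrightarrow> Y \<noteq> {} \<and> Y \<subseteq> topspace X"
  unfolding invariant_set_def by auto

lemma t1_space_closed_chain:
  assumes "t1_space X" and "infinite (topspace X)"
  obtains Y :: "nat \<Rightarrow> 'a set"
  where "\<forall>i\<le>n. closedin X (Y i) \<and> Y i \<noteq> {} \<and> Y i \<subseteq> topspace X"
    and "\<forall>i<n. Y i \<subset> Y (Suc i)" and "Y n = topspace X"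
proof -
  obtain x :: "nat \<Rightarrow> 'a" where x: "inj x" "range x \<subseteq> topspace X"
    using infinite_countable_subset[OF assms(2)] by blast
  define Y where "Y i = (if i < n then x ` {..i} else topspace X)" for i
  have "closedin X (Y i) \<and> Y i \<noteq> {} \<and> Y i \<subseteq> topspace X" for i
    using assms x unfolding Y_def t1_space_closedin_finite by auto
  moreover have "Y i \<subset> Y (Suc i)" if "i < n" for i
  proof (cases "Suc i < n")
    case True
    have "x (Suc i) \<notin> x ` {..i}"
      using x(1) by (auto simp: inj_eq)
    then show ?thesis
      using True unfolding Y_def by (auto simp: atMost_Suc)
  next
    case False
    have "x ` {..i} \<noteq> topspace X"
      using assms(2) by (metis finite_atMost finite_imageI)
    then show ?thesis
      using False that x(2) unfolding Y_def by auto
  qed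
  ultimately show ?thesis
    using that[of Y] by (simp add: Y_def)
qed

lemma action_height_trivial_infinite:
  assumes "t1_space X" and "infinite (topspace X)"
  shows "action_height X {restrict id (topspace X)} = \<infinity>"
  unfolding action_height_def invariant_set_trivial_iff
proof (rule Sup_enat_eq_infinity, simp)
  fix n
  obtain Y :: "nat \<Rightarrow> 'a set"
    where "\<forall>i\<le>n. closedin X (Y i) \<and> Y i \<noteq> {} \<and> Y i \<subseteq> topspace X"
      and "\<forall>i<n. Y i \<subset> Y (Suc i)" and "Y n = topspace X"
    using t1_space_closed_chain[OF assms] .
  then show "\<exists>Y. (\<forall>i\<le>n. closedin X (Y i) \<and> Y i \<noteq> {} \<and> Y i \<subseteq> topspace X) \<and>
                (\<forall>i<n. Y i \<subset> Y (Suc i)) \<and> Y n = topspace X"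
    by blast
qed

theorem lemma2p2:
  fixes X :: "'a topology"
  assumes "Hausdorff_space X"
  shows "\<infinity> \<in> P_h X \<longleftrightarrow> infinite (topspace X)"
proof
  assume "\<infinity> \<in> P_h X"
  then obtain G where "action_height X G = \<infinity>"
    unfolding P_h_def by (auto dest: sym)
  then show "infinite (topspace X)"
    using action_height_le_card[of X G] by auto
next
  assume "infinite (topspace X)"
  then have "action_height X {restrict id (topspace X)} = \<infinity>"
    using action_height_trivial_infinite Hausdorff_imp_t1_space assms by blast
  then show "\<infinity> \<in> P_h X"
    unfolding P_h_def using homeo_subgroup_trivial[of X] by force
qed

end
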